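(* Let $f_{AN_2}(x)=\frac{x+1}{2}-\left(\frac{\sqrt x+1}{2}\right)\sqrt{\frac{x+1}{2}}$ for $x\in(0,\infty)$, let $f_{AN_2}^*(u)=u\,f_{AN_2}\!\left(\frac{1-u}{u}\right)$ for $u\in(0,1)$, extended by continuity to $[0,1]$ (explicitly $f_{AN_2}^*(u)=\frac12-\frac{\sqrt2}{4}\left(\sqrt u+\sqrt{1-u}\right)$), and define $\overline M_{AN_2}(C_1,C_2)=E_X\{f_{AN_2}^*(P(C_2\mid x))\}$. Then $$P_e\le \frac12\left[1-\frac{4}{2-\sqrt2}\,\overline M_{AN_2}(C_1,C_2)\right].$$
   Context: Two-class decision problem: classes $C_1,C_2$, an observation $x$ in a space $\mathrm X$ with density $p(x)$, and a posteriori probabilities $P(C_1\mid x),P(C_2\mid x)\ge0$ with $P(C_1\mid x)+P(C_2\mid x)=1$. $E_X\{g(x)\}=\int_{\mathrm X} g(x)p(x)\,dx$. $P_e=E_X\{\min(P(C_1\mid x),P(C_2\mid x))\}$ is the Bayesian probability of error. *)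

theory Defs
  imports "HOL-Analysis.Analysis"
begin

definition fAN2 :: "real \<Rightarrow> real" where
  "fAN2 x = (x + 1) / 2 - ((sqrt x + 1) / 2) * sqrt ((x + 1) / 2)"

definition fAN2star :: "real \<Rightarrow> real" where
  "fAN2star u = (if 0 < u \<and> u < 1 then u * fAN2 ((1 - u) / u)
                 else 1/2 - sqrt 2 / 4 * (sqrt u + sqrt (1 - u)))"

text \<open>Expectation w.r.t. the density p on the observation space (reference measure M, i.e. dx).\<close>
definition ExpX :: "'a measure \<Rightarrow> ('a \<Rightarrow> real) \<Rightarrow> ('a \<Rightarrow> real) \<Rightarrow> real" where
  "ExpX M p g = (\<integral>x. g x * p x \<partial>M)"

definition Pe :: "'a measure \<Rightarrow> ('a \<Rightarrow> real) \<Rightarrow> ('a \<Rightarrow> real) \<Rightarrow> ('a \<Rightarrow> real) \<Rightarrow> real" where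
  "Pe M p P1 P2 = ExpX M p (\<lambda>x. min (P1 x) (P2 x))"

definition MAN2 :: "'a measure \<Rightarrow> ('a \<Rightarrow> real) \<Rightarrow> ('a \<Rightarrow> real) \<Rightarrow> ('a \<Rightarrow> real) \<Rightarrow> real" where
  "MAN2 M p P1 P2 = ExpX M p (\<lambda>x. fAN2star (P2 x))"

end

theory Submission imports Defs begin

text \<open>Pointwise, with \<open>s = \<surd>u + \<surd>(1 - u)\<close>, the bound reads \<open>2(\<surd>2 - 1) min u (1 - u) \<le> s - 1\<close>.
  On \<open>[0, 1/2]\<close> this says that the concave function \<open>s\<close> lies above its chord, which joins
  \<open>(0, 1)\<close> to \<open>(1/2, \<surd>2)\<close>; the other half follows by symmetry.\<close>

lemma real_sqrt_convex_comb_ge: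
  fixes x y t :: real
  assumes "0 \<le> x" "0 \<le> y" "0 \<le> t" "t \<le> 1"
  shows "(1 - t) * sqrt x + t * sqrt y \<le> sqrt ((1 - t) * x + t * y)"
proof (rule real_le_rsqrt)
  have "2 * (sqrt x * sqrt y) \<le> x + y"
    using sum_squares_bound[of "sqrt x" "sqrt y"] assms by (simp add: power2_eq_square)
  then have "t * (1 - t) * (2 * (sqrt x * sqrt y)) \<le> t * (1 - t) * (x + y)"
    using assms by (intro mult_left_mono) auto
  then show "((1 - t) * sqrt x + t * sqrt y)\<^sup>2 \<le> (1 - t) * x + t * y"
    using assms by (simp add: power2_eq_square algebra_simps)
qed

lemma sqrt_add_sqrt_one_minus_ge_chord:
  fixes u :: real
  assumes "0 \<le> u" "u \<le> 1/2"
  shows "1 + 2 * (sqrt 2 - 1) * u \<le> sqrt u + sqrt (1 - u)"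
proof -
  define t where "t = 2 * u"
  have t: "0 \<le> t" "t \<le> 1" using assms by (auto simp: t_def)
  have half: "sqrt (1/2) = sqrt 2 / 2"
    by (simp add: real_sqrt_divide field_simps)
  have "t * sqrt (1/2) \<le> sqrt u"
    using real_sqrt_convex_comb_ge[of 0 "1/2" t] t by (simp add: t_def)
  moreover have "(1 - t) * 1 + t * sqrt (1/2) \<le> sqrt (1 - u)"
    using real_sqrt_convex_comb_ge[of 1 "1/2" t] t by (simp add: t_def algebra_simps)
  ultimately show ?thesis
    unfolding half by (simp add: t_def algebra_simps)
qed

lemma min_le_sqrt_add_sqrt_one_minus:
  fixes u :: real
  assumes "0 \<le> u" "u \<le> 1"
  shows "2 * (sqrt 2 - 1) * min u (1 - u) \<le> sqrt u + sqrt (1 - u) - 1"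
proof (cases "u \<le> 1/2")
  case True
  then show ?thesis
    using sqrt_add_sqrt_one_minus_ge_chord[of u] assms by simp
next
  case False
  then show ?thesis
    using sqrt_add_sqrt_one_minus_ge_chord[of "1 - u"] assms by (simp add: add.commute)
qed

lemma fAN2star_eq:
  fixes u :: real
  assumes "0 \<le> u" "u \<le> 1"
  shows "fAN2star u = 1/2 - sqrt 2 / 4 * (sqrt u + sqrt (1 - u))"
proof (cases "0 < u \<and> u < 1")
  case True
  then have u: "0 < u" by simp
  have mid: "((1 - u) / u + 1) / 2 = 1 / (2 * u)"
    using u by (simp add: field_simps)
  have sqrt_ratio: "sqrt ((1 - u) / u) = sqrt (1 - u) / sqrt u"
    by (simp add: real_sqrt_divide)
  have sqrt_mid: "sqrt (1 / (2 * u)) = 1 / (sqrt 2 * sqrt u)"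
    by (simp add: real_sqrt_divide real_sqrt_mult)
  have "fAN2star u
      = u * (1 / (2 * u) - ((sqrt (1 - u) / sqrt u + 1) / 2) * (1 / (sqrt 2 * sqrt u)))"
    using True unfolding fAN2star_def fAN2_def mid sqrt_ratio sqrt_mid by simp
  also have "\<dots> = 1/2 - (sqrt (1 - u) + sqrt u) / (2 * sqrt 2)"
  proof -
    have "v * v * (1 / (2 * (v * v)) - ((w / v + 1) / 2) * (1 / (c * v))) = 1/2 - (w + v) / (2 * c)"
      if "0 < v" "0 < c" for v w c :: real
      using that by (simp add: field_simps)
    from this[of "sqrt u" "sqrt 2" "sqrt (1 - u)"] show ?thesis
      using u by simp
  qed
  also have "\<dots> = 1/2 - sqrt 2 / 4 * (sqrt u + sqrt (1 - u))"
    by (simp add: field_simps)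
  finally show ?thesis .
next
  case False
  then show ?thesis by (auto simp: fAN2star_def)
qed

lemma min_le_fAN2star_bound:
  fixes u :: real
  assumes "0 \<le> u" "u \<le> 1"
  shows "min u (1 - u) \<le> 1/2 * (1 - 4 / (2 - sqrt 2) * fAN2star u)"
proof -
  define s where "s = sqrt u + sqrt (1 - u)"
  have "sqrt 2 < 2"
    using real_sqrt_less_mono[of 2 4] by simp
  moreover have "1 < sqrt 2" by simp
  ultimately have "1/2 * (1 - 4 / (2 - sqrt 2) * (1/2 - sqrt 2 / 4 * s))
      = (s - 1) / (2 * (sqrt 2 - 1))"
    by (simp add: field_simps) (simp add: algebra_simps flip: mult.assoc)
  moreover have "min u (1 - u) \<le> (s - 1) / (2 * (sqrt 2 - 1))"
    using min_le_sqrt_add_sqrt_one_minus[OF assms]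
    by (simp add: s_def pos_le_divide_eq mult.commute)
  ultimately show ?thesis
    unfolding fAN2star_eq[OF assms] s_def[symmetric] by linarith
qed

lemma abs_fAN2star_le_one:
  fixes u :: real
  assumes "0 \<le> u" "u \<le> 1"
  shows "\<bar>fAN2star u\<bar> \<le> 1"
proof -
  have "sqrt u \<le> 1" "sqrt (1 - u) \<le> 1"
    using assms by auto
  then have "sqrt u + sqrt (1 - u) \<le> 2"
    by linarith
  moreover have "sqrt 2 \<le> 2"
    using real_sqrt_le_mono[of 2 4] by simp
  ultimately have "sqrt 2 / 4 * (sqrt u + sqrt (1 - u)) \<le> 2 / 4 * 2"
    using assms by (intro mult_mono) auto
  moreover have "0 \<le> sqrt 2 / 4 * (sqrt u + sqrt (1 - u))"
    using assms by simp
  ultimately show ?thesis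
    using fAN2star_eq[OF assms] by linarith
qed

lemma integrable_bounded_mult_density:
  fixes g p :: "'a \<Rightarrow> real"
  assumes "integrable M p" "g \<in> borel_measurable M"
    and "\<And>x. x \<in> space M \<Longrightarrow> \<bar>g x\<bar> \<le> B"
  shows "integrable M (\<lambda>x. g x * p x)"
proof (rule Bochner_Integration.integrable_bound)
  show "integrable M (\<lambda>x. B * p x)"
    using assms(1) by simp
  show "(\<lambda>x. g x * p x) \<in> borel_measurable M"
    using assms(1,2) by (simp add: borel_measurable_integrable)
  show "AE x in M. norm (g x * p x) \<le> norm (B * p x)"
  proof (intro AE_I2)
    fix x assume "x \<in> space M"
    then have "\<bar>g x\<bar> \<le> \<bar>B\<bar>"
      using assms(3) by force
    then show "norm (g x * p x) \<le> norm (B * p x)"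
      by (simp add: abs_mult mult_right_mono)
  qed
qed

lemma ExpX_le_affine:
  fixes p g h :: "'a \<Rightarrow> real"
  assumes p_nonneg: "\<And>x. x \<in> space M \<Longrightarrow> 0 \<le> p x"
    and p_int: "integrable M p" and p_total: "(\<integral>x. p x \<partial>M) = 1"
    and g_meas: "g \<in> borel_measurable M" and h_meas: "h \<in> borel_measurable M"
    and g_bdd: "\<And>x. x \<in> space M \<Longrightarrow> \<bar>g x\<bar> \<le> B"
    and h_bdd: "\<And>x. x \<in> space M \<Longrightarrow> \<bar>h x\<bar> \<le> C"
    and le: "\<And>x. x \<in> space M \<Longrightarrow> g x \<le> a + b * h x"
  shows "ExpX M p g \<le> a + b * ExpX M p h"
proof -
  have int_h: "integrable M (\<lambda>x. h x * p x)"
    using integrable_bounded_mult_density[OF p_int h_meas h_bdd] .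
  have "ExpX M p g \<le> (\<integral>x. a * p x + b * (h x * p x) \<partial>M)"
    unfolding ExpX_def
  proof (rule integral_mono)
    show "integrable M (\<lambda>x. g x * p x)"
      using integrable_bounded_mult_density[OF p_int g_meas g_bdd] .
    show "integrable M (\<lambda>x. a * p x + b * (h x * p x))"
      using p_int int_h by simp
    show "g x * p x \<le> a * p x + b * (h x * p x)" if "x \<in> space M" for x
      using mult_right_mono[OF le p_nonneg, OF that that] by (simp add: algebra_simps)
  qed
  also have "\<dots> = a + b * ExpX M p h"
    using p_int int_h p_total by (simp add: ExpX_def)
  finally show ?thesis .
qed

theorem mainTheorem7:
  fixes M :: "'a measure" and p P1 P2 :: "'a \<Rightarrow> real"
  assumes p_meas: "p \<in> borel_measurable M"
    and p_nonneg: "\<And>x. x \<in> space M \<Longrightarrow> p x \<ge> 0"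
    and p_int: "integrable M p"
    and p_total: "(\<integral>x. p x \<partial>M) = 1"
    and P1_meas: "P1 \<in> borel_measurable M"
    and P2_meas: "P2 \<in> borel_measurable M"
    and P1_nonneg: "\<And>x. x \<in> space M \<Longrightarrow> P1 x \<ge> 0"
    and P2_nonneg: "\<And>x. x \<in> space M \<Longrightarrow> P2 x \<ge> 0"
    and P_sum: "\<And>x. x \<in> space M \<Longrightarrow> P1 x + P2 x = 1"
  shows "Pe M p P1 P2 \<le> 1/2 * (1 - 4 / (2 - sqrt 2) * MAN2 M p P1 P2)"
proof -
  have P2_unit: "0 \<le> P2 x" "P2 x \<le> 1" and P1_eq: "P1 x = 1 - P2 x" if "x \<in> space M" for x
    using P1_nonneg[OF that] P2_nonneg[OF that] P_sum[OF that] by auto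
  have fAN2star_meas: "(\<lambda>x. fAN2star (P2 x)) \<in> borel_measurable M"
  proof (rule measurable_cong[THEN iffD1])
    show "(\<lambda>x. 1/2 - sqrt 2 / 4 * (sqrt (P2 x) + sqrt (1 - P2 x))) \<in> borel_measurable M"
      using P2_meas by measurable
  qed (simp add: fAN2star_eq P2_unit)
  have "ExpX M p (\<lambda>x. min (P1 x) (P2 x))
      \<le> 1/2 + (- 1/2 * (4 / (2 - sqrt 2))) * ExpX M p (\<lambda>x. fAN2star (P2 x))"
  proof (rule ExpX_le_affine[OF p_nonneg p_int p_total _ fAN2star_meas])
    show "(\<lambda>x. min (P1 x) (P2 x)) \<in> borel_measurable M"
      using P1_meas P2_meas by measurable
    fix x assume x: "x \<in> space M"
    show "\<bar>min (P1 x) (P2 x)\<bar> \<le> 1" "\<bar>fAN2star (P2 x)\<bar> \<le> 1"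
      using P2_unit[OF x] P1_eq[OF x] abs_fAN2star_le_one[OF P2_unit[OF x]] by auto
    have "min (P1 x) (P2 x) = min (P2 x) (1 - P2 x)"
      using P1_eq[OF x] by (simp add: min.commute)
    then show "min (P1 x) (P2 x) \<le> 1/2 + (- 1/2 * (4 / (2 - sqrt 2))) * fAN2star (P2 x)"
      using min_le_fAN2star_bound[OF P2_unit[OF x]] by (simp add: algebra_simps)
  qed
  then show ?thesis
    by (simp add: Pe_def MAN2_def algebra_simps)
qed

end
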